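(* Let $S_j$ be local potentials satisfying (A)–(E), and let $(p_1,q_1),\dots,(p_d,q_d)\in\mathbb{Z}^d\times\mathbb{Z}$ with $p_1,\dots,p_d$ linearly independent. If $x\in\mathbb{X}_{p,q}$ is a global minimizer, then $x$ minimizes $W_{p,q}$ on $\mathbb{X}_{p,q}$.
   Context: Notation: $\|i\|=\sum_{k=1}^d|i_k|$, $B_j^r=\{k:\|k-j\|\le r\}$, $(\tau_{k,l}x)_i=x_{i+k}+l$. Local potentials $S_j:\mathbb{R}^{\mathbb{Z}^d}\to\mathbb{R}$, $j\in\mathbb{Z}^d$, satisfy: (A) there is $r\in(0,\infty)$ and $C^2$ functions $s_j:\mathbb{R}^{B_j^r}\to\mathbb{R}$ with $S_j(x)=s_j(x|_{B_j^r})$; (B) $S_j(\tau_{k,l}x)=S_{j+k}(x)$; (C) each $S_j$ is bounded below and $S_j(x)\to\infty$ as $|x_k-x_j|\to\infty$ whenever $\|k-j\|=1$; (D) $\partial_{i,k}S_j\le0$ for $i\ne k$, and $\partial_{i,k}S_i<0$ when $\|i-k\|=1$; (E) $|\partial_{i,k}S_j|\le C$ uniformly. With $p$ the matrix with columns $p_j$: $B_p=p([0,1)^d)\cap\mathbb{Z}^d$, $\mathbb{X}_{p,q}=\{x:\tau_{p_j,q_j}x=x\ \forall j\}$, $W_{p,q}(x)=\sum_{j\in B_p}S_j(x)$. For finite $B\subset\mathbb{Z}^d$: $W_B(x)=\sum_{j\in B}S_j(x)$ and $\mathring{B}^{(r)}=\{i\in B:B_i^r\subset B\}$. A configuration $x$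 is a global minimizer if $W_B(x+y)\ge W_B(x)$ for every finite $B$ and every $y$ with support in $\mathring{B}^{(r)}$. *)

theory Defs
  imports "HOL-Analysis.Analysis"
begin

text \<open>The space of configurations carries the product topology (Function_Topology).\<close>

type_synonym 'd site = "int ^ 'd"
type_synonym 'd config = "'d site \<Rightarrow> real"

definition norm1 :: "'d::finite site \<Rightarrow> int" where
  "norm1 i = (\<Sum>k\<in>UNIV. \<bar>i $ k\<bar>)"

definition ball1 :: "'d::finite site \<Rightarrow> real \<Rightarrow> 'd site set" where
  "ball1 j r = {k. real_of_int (norm1 (k - j)) \<le> r}"

definition tau :: "'d::finite site \<Rightarrow> int \<Rightarrow> 'd config \<Rightarrow> 'd config" where
  "tau k l x = (\<lambda>i. x (i + k) + real_of_int l)"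

definition partial_exists :: "'d::finite site \<Rightarrow> ('d config \<Rightarrow> real) \<Rightarrow> 'd config \<Rightarrow> bool" where
  "partial_exists i F x \<longleftrightarrow> (\<lambda>t. F (x(i := x i + t))) differentiable (at 0)"

definition partial :: "'d::finite site \<Rightarrow> ('d config \<Rightarrow> real) \<Rightarrow> 'd config \<Rightarrow> real" where
  "partial i F x = deriv (\<lambda>t. F (x(i := x i + t))) 0"

definition partial2 :: "'d::finite site \<Rightarrow> 'd site \<Rightarrow> ('d config \<Rightarrow> real) \<Rightarrow> 'd config \<Rightarrow> real" where
  "partial2 i k F = partial i (partial k F)"

text \<open>For a function depending on finitely many coordinates (as in (A)) this is
  exactly \<open>C\<^sup>2\<close>-ness of the induced function on \<open>\<real>^{B}\<close>.\<close>
definition C2 :: "('d::finite config \<Rightarrow> real) \<Rightarrow> bool" where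
  "C2 F \<longleftrightarrow> continuous_on UNIV F
     \<and> (\<forall>i x. partial_exists i F x) \<and> (\<forall>i. continuous_on UNIV (partial i F))
     \<and> (\<forall>i k x. partial_exists i (partial k F) x)
     \<and> (\<forall>i k. continuous_on UNIV (partial2 i k F))"

definition condA :: "real \<Rightarrow> ('d::finite site \<Rightarrow> 'd config \<Rightarrow> real) \<Rightarrow> bool" where
  "condA r S \<longleftrightarrow> 0 < r \<and> (\<forall>j. (\<forall>x y. (\<forall>k\<in>ball1 j r. x k = y k) \<longrightarrow> S j x = S j y) \<and> C2 (S j))"

definition condB :: "('d::finite site \<Rightarrow> 'd config \<Rightarrow> real) \<Rightarrow> bool" where
  "condB S \<longleftrightarrow> (\<forall>j k l x. S j (tau k l x) = S (j + k) x)"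

definition condC :: "('d::finite site \<Rightarrow> 'd config \<Rightarrow> real) \<Rightarrow> bool" where
  "condC S \<longleftrightarrow> (\<forall>j. (\<exists>c. \<forall>x. c \<le> S j x)) \<and>
     (\<forall>j k. norm1 (k - j) = 1 \<longrightarrow>
        (\<forall>M. \<exists>R. \<forall>x. R \<le> \<bar>x k - x j\<bar> \<longrightarrow> M \<le> S j x))"

definition condD :: "('d::finite site \<Rightarrow> 'd config \<Rightarrow> real) \<Rightarrow> bool" where
  "condD S \<longleftrightarrow> (\<forall>i k j x. i \<noteq> k \<longrightarrow> partial2 i k (S j) x \<le> 0) \<and>
     (\<forall>i k x. norm1 (i - k) = 1 \<longrightarrow> partial2 i k (S i) x < 0)"

definition condE :: "('d::finite site \<Rightarrow> 'd config \<Rightarrow> real) \<Rightarrow> bool" where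
  "condE S \<longleftrightarrow> (\<exists>C. \<forall>i k j x. \<bar>partial2 i k (S j) x\<bar> \<le> C)"

definition realv :: "'d::finite site \<Rightarrow> real ^ 'd" where
  "realv k = (\<chi> i. real_of_int (k $ i))"

definition Bp :: "('d::finite \<Rightarrow> 'd site) \<Rightarrow> 'd site set" where
  "Bp p = {k. \<exists>t::real ^ 'd. (\<forall>j. 0 \<le> t $ j \<and> t $ j < 1) \<and>
                realv k = (\<Sum>j\<in>UNIV. t $ j *\<^sub>R realv (p j))}"

definition Xpq :: "('d::finite \<Rightarrow> 'd site) \<Rightarrow> ('d \<Rightarrow> int) \<Rightarrow> 'd config set" where
  "Xpq p q = {x. \<forall>j. tau (p j) (q j) x = x}"

definition Wpq :: "('d::finite site \<Rightarrow> 'd config \<Rightarrow> real) \<Rightarrow> ('d \<Rightarrow> 'd site) \<Rightarrow> 'd config \<Rightarrow> real" where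
  "Wpq S p x = (\<Sum>j\<in>Bp p. S j x)"

definition WB :: "('d::finite site \<Rightarrow> 'd config \<Rightarrow> real) \<Rightarrow> 'd site set \<Rightarrow> 'd config \<Rightarrow> real" where
  "WB S B x = (\<Sum>j\<in>B. S j x)"

definition interior_r :: "real \<Rightarrow> 'd::finite site set \<Rightarrow> 'd site set" where
  "interior_r r B = {i\<in>B. ball1 i r \<subseteq> B}"

definition global_minimizer :: "real \<Rightarrow> ('d::finite site \<Rightarrow> 'd config \<Rightarrow> real) \<Rightarrow> 'd config \<Rightarrow> bool" where
  "global_minimizer r S x \<longleftrightarrow>
     (\<forall>B y. finite B \<longrightarrow> {i. y i \<noteq> 0} \<subseteq> interior_r r B \<longrightarrow>
        WB S B x \<le> WB S B (\<lambda>i. x i + y i))"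

end

theory Submission
  imports Defs
begin

(* Let x in X_{p,q} be a global minimizer and z in X_{p,q}.  Each site
   is uniquely j + n_1 p_1 + ... + n_d p_d with j in the fundamental domain B_p, so the
   periodic box B_N (all n_m in {0..N-1}) consists of N^d translates of B_p and, by (B),
   W_{B_N}(u) = N^d W_{p,q}(u) for u in X_{p,q}.  Replacing x by z on the r-interior of
   B_N cannot lower the energy (minimality of x), and the resulting mixture differs from
   z, as seen by a potential, only at the O(N^{d-1}) sites of a collar of B_N.  By
   periodicity, (A) and the lower bound in (C), each such site costs at most a constant
   K.  So N^d W(x) <= N^d W(z) + K Q N^{d-1} for all N, whence W(x) <= W(z). *)

section \<open>Lattice coordinates relative to the periods\<close>

definition lat :: "('d::finite \<Rightarrow> 'd site) \<Rightarrow> ('d \<Rightarrow> int) \<Rightarrow> 'd site" where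
  "lat p n = (\<chi> i. \<Sum>m\<in>UNIV. n m * p m $ i)"

lemma realv_add: "realv (a + b) = realv a + realv b"
  by (simp add: realv_def vec_eq_iff)

lemma realv_diff: "realv (a - b) = realv a - realv b"
  by (simp add: realv_def vec_eq_iff)

lemma realv_lat: "realv (lat p n) = (\<Sum>m\<in>UNIV. of_int (n m) *\<^sub>R realv (p m))"
  by (simp add: realv_def lat_def vec_eq_iff sum_component)

lemma lat_diff: "lat p (\<lambda>m. a m - b m) = lat p a - lat p b"
  by (simp add: lat_def vec_eq_iff left_diff_distrib sum_subtractf)

lemma lat_sum: "lat p n = (\<Sum>m\<in>UNIV. n m *s p m)"
  by (simp add: lat_def vec_eq_iff sum_component)

context
  fixes p :: "'d::finite \<Rightarrow> 'd site"
  assumes injp: "inj (\<lambda>j. realv (p j))" and indp: "independent (range (\<lambda>j. realv (p j)))"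
begin

lemma coef_unique:
  assumes "(\<Sum>m\<in>UNIV. a m *\<^sub>R realv (p m)) = (\<Sum>m\<in>UNIV. b m *\<^sub>R realv (p m))"
  shows "a m = b m"
proof -
  let ?P = "\<lambda>j. realv (p j)"
  define u where "u v = a (inv ?P v) - b (inv ?P v)" for v
  have "(\<Sum>v\<in>range ?P. u v *\<^sub>R v) = (\<Sum>m\<in>UNIV. u (?P m) *\<^sub>R ?P m)"
    by (subst sum.reindex[OF injp]) simp
  also have "\<dots> = 0"
    using assms by (simp add: u_def inv_f_f[OF injp] scaleR_diff_left sum_subtractf)
  finally have "u (?P m) = 0"
    by (intro real_vector.independentD[OF indp _ order_refl]) auto
  thus ?thesis by (simp add: u_def inv_f_f[OF injp])
qed

lemma lat_inj: "inj (lat p)"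
proof (rule injI, rule ext)
  fix a b m assume "lat p a = lat p b"
  hence "(\<Sum>m\<in>UNIV. of_int (a m) *\<^sub>R realv (p m)) = (\<Sum>m\<in>UNIV. of_int (b m) *\<^sub>R realv (p m))"
    by (simp flip: realv_lat)
  from coef_unique[OF this, of m] show "a m = b m" by simp
qed

text \<open>\<open>d\<close> independent vectors span \<open>\<real>\<^sup>d\<close>.\<close>
lemma spanning: "\<exists>t. v = (\<Sum>m\<in>UNIV. t m *\<^sub>R realv (p m))"
proof -
  let ?P = "\<lambda>j. realv (p j)"
  have "card (range ?P) = CARD('d)" using card_image[OF injp] by simp
  hence "UNIV \<subseteq> span (range ?P)"
    by (intro card_ge_dim_independent[OF _ indp]) auto
  then obtain u where "v = (\<Sum>w\<in>range ?P. u w *\<^sub>R w)"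
    using real_vector.span_finite[of "range ?P"] by auto
  also have "\<dots> = (\<Sum>m\<in>UNIV. u (?P m) *\<^sub>R ?P m)"
    by (subst sum.reindex[OF injp]) simp
  finally show ?thesis by (rule exI[of _ "\<lambda>m. u (realv (p m))"])
qed

lemma decomp_exists: "\<exists>j n. j \<in> Bp p \<and> k = j + lat p n"
proof -
  obtain t where t: "realv k = (\<Sum>m\<in>UNIV. t m *\<^sub>R realv (p m))" using spanning by blast
  define n where "n m = \<lfloor>t m\<rfloor>" for m
  define j where "j = k - lat p n"
  have "realv j = (\<Sum>m\<in>UNIV. (t m - of_int (n m)) *\<^sub>R realv (p m))"
    by (simp add: j_def realv_diff realv_lat t scaleR_diff_left sum_subtractf)
  moreover have "\<And>m. 0 \<le> t m - of_int (n m)" "\<And>m. t m - of_int (n m) < 1"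
    unfolding n_def by (metis frac_def frac_ge_0) (metis frac_def frac_lt_1)
  ultimately have "j \<in> Bp p"
    unfolding Bp_def by (intro CollectI exI[of _ "\<chi> m. t m - of_int (n m)"]) simp
  thus ?thesis unfolding j_def by force
qed

lemma decomp_unique:
  assumes "j1 \<in> Bp p" "j2 \<in> Bp p" "j1 + lat p n1 = j2 + lat p n2"
  shows "n1 = n2"
proof
  fix m
  obtain t1 where t1: "\<forall>j. 0 \<le> t1 $ j \<and> t1 $ j < 1" "realv j1 = (\<Sum>j\<in>UNIV. t1 $ j *\<^sub>R realv (p j))"
    using assms(1) unfolding Bp_def by blast
  obtain t2 where t2: "\<forall>j. 0 \<le> t2 $ j \<and> t2 $ j < 1" "realv j2 = (\<Sum>j\<in>UNIV. t2 $ j *\<^sub>R realv (p j))"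
    using assms(2) unfolding Bp_def by blast
  have "realv (j1 + lat p n1) = realv (j2 + lat p n2)" using assms(3) by simp
  hence "(\<Sum>m\<in>UNIV. (t1 $ m + of_int (n1 m)) *\<^sub>R realv (p m)) =
         (\<Sum>m\<in>UNIV. (t2 $ m + of_int (n2 m)) *\<^sub>R realv (p m))"
    by (simp add: realv_add realv_lat t1 t2 scaleR_add_left sum.distrib)
  from coef_unique[OF this, of m]
  have "of_int (n1 m - n2 m) = t2 $ m - t1 $ m" by simp
  hence "-1 < real_of_int (n1 m - n2 m)" "real_of_int (n1 m - n2 m) < 1"
    using t1(1)[rule_format, of m] t2(1)[rule_format, of m] by linarith+
  thus "n1 m = n2 m" by simp
qed

end

section \<open>Periodic configurations\<close>

lemma Xpq_iff: "u \<in> Xpq p q \<longleftrightarrow> (\<forall>m i. u (i + p m) + of_int (q m) = u i)"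
  by (simp add: Xpq_def tau_def fun_eq_iff)

lemma shift_nat:
  fixes f :: "'d::finite site \<Rightarrow> real"
  assumes "\<And>i. f (i + a) + c = f i"
  shows "f (i + of_nat k *s a) + of_nat k * c = f i"
proof (induction k arbitrary: i)
  case 0 then show ?case by (simp add: vec_eq_iff)
next
  case (Suc k)
  have "f (i + of_nat (Suc k) *s a) = f ((i + a) + of_nat k *s a)"
    by (simp add: vec_eq_iff algebra_simps)
  also have "\<dots> = f (i + a) - of_nat k * c" using Suc[of "i + a"] by simp
  finally show ?case using assms[of i] by (simp add: algebra_simps)
qed

lemma shift_int:
  fixes f :: "'d::finite site \<Rightarrow> real"
  assumes per: "\<And>i. f (i + a) + c = f i"
  shows "f (i + k *s a) + of_int k * c = f i"
proof (cases "k \<ge> 0")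
  case True
  then obtain n where "k = of_nat n" by (metis nonneg_int_cases)
  moreover have "f (i + of_nat n *s a) + of_nat n * c = f i" by (rule shift_nat) (rule per)
  ultimately show ?thesis by simp
next
  case False
  then obtain n where k: "k = - of_nat n" by (intro that[of "nat (-k)"]) simp
  have "f ((i + k *s a) + of_nat n *s a) + of_nat n * c = f (i + k *s a)"
    by (rule shift_nat) (rule per)
  moreover have "(i + k *s a) + of_nat n *s a = i" by (simp add: k vec_eq_iff)
  ultimately have "f i + of_nat n * c = f (i + k *s a)" by simp
  thus ?thesis by (simp add: k)
qed

definition lq :: "('d::finite \<Rightarrow> int) \<Rightarrow> ('d \<Rightarrow> int) \<Rightarrow> int" where
  "lq q n = (\<Sum>m\<in>UNIV. n m * q m)"

lemma shift_sum:
  assumes "u \<in> Xpq p q" "finite A"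
  shows "u (i + (\<Sum>m\<in>A. n m *s p m)) + of_int (\<Sum>m\<in>A. n m * q m) = u i"
  using assms(2)
proof (induction A arbitrary: i rule: finite_induct)
  case empty then show ?case by simp
next
  case (insert m A)
  have per: "\<And>i. u (i + p m) + of_int (q m) = u i" using assms(1) Xpq_iff by blast
  have "u (i + (\<Sum>m\<in>insert m A. n m *s p m)) + of_int (\<Sum>m\<in>insert m A. n m * q m)
      = (u ((i + n m *s p m) + (\<Sum>m\<in>A. n m *s p m)) + of_int (\<Sum>m\<in>A. n m * q m))
        + of_int (n m) * of_int (q m)"
    using insert by (simp add: algebra_simps)
  also have "\<dots> = u (i + n m *s p m) + of_int (n m) * of_int (q m)" using insert.IH by simp
  also have "\<dots> = u i" by (rule shift_int[of u "p m" "real_of_int (q m)"]) (rule per)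
  finally show ?case .
qed

lemma tau_lat: "u \<in> Xpq p q \<Longrightarrow> tau (lat p n) (lq q n) u = u"
  using shift_sum[of u p q UNIV _ n] by (simp add: tau_def fun_eq_iff lat_sum lq_def)

lemma S_per: "condB S \<Longrightarrow> u \<in> Xpq p q \<Longrightarrow> S (j + lat p n) u = S j u"
  unfolding condB_def by (metis tau_lat)

definition mix :: "'d::finite config \<Rightarrow> 'd config \<Rightarrow> 'd site set \<Rightarrow> 'd config" where
  "mix x z A = (\<lambda>i. if i \<in> A then z i else x i)"

lemma tau_mix: "x \<in> Xpq p q \<Longrightarrow> z \<in> Xpq p q \<Longrightarrow>
   tau (lat p n) (lq q n) (mix x z A) = mix x z {i. i + lat p n \<in> A}"
  using tau_lat[of x p q n] tau_lat[of z p q n] by (simp add: tau_def mix_def fun_eq_iff)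

section \<open>Finiteness of the geometric objects\<close>

definition ibox :: "int \<Rightarrow> 'd::finite site set" where
  "ibox R = {k. \<forall>m. \<bar>k $ m\<bar> \<le> R}"

lemma finite_ibox: "finite (ibox R :: 'd::finite site set)"
proof -
  have "ibox R \<subseteq> vec_lambda ` (PiE UNIV (\<lambda>_::'d. {-R..R}))"
  proof
    fix k :: "'d site" assume "k \<in> ibox R"
    hence "\<bar>k $ m\<bar> \<le> R" for m by (simp add: ibox_def)
    hence "-R \<le> k $ m \<and> k $ m \<le> R" for m by (meson abs_le_D1 abs_le_D2 minus_le_iff)
    hence "(\<lambda>m. k $ m) \<in> PiE UNIV (\<lambda>_. {-R..R})" by auto
    thus "k \<in> vec_lambda ` (PiE UNIV (\<lambda>_::'d. {-R..R}))" by (intro image_eqI[of _ _ "\<lambda>m. k $ m"]) auto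
  qed
  moreover have "finite (PiE UNIV (\<lambda>_::'d. {-R..R}))" by (intro finite_PiE) auto
  ultimately show ?thesis by (meson finite_imageI finite_subset)
qed

lemma comp_le_norm1: "\<bar>k $ m\<bar> \<le> norm1 k"
  unfolding norm1_def by (rule member_le_sum) auto

lemma norm1_triangle: "norm1 (a + b) \<le> norm1 a + norm1 b"
  unfolding norm1_def by (simp add: sum.distrib[symmetric] sum_mono abs_triangle_ineq)

lemma finite_ball1: "finite (ball1 j r)"
proof -
  have "ball1 j r \<subseteq> (\<lambda>v. v + j) ` ibox \<lceil>r\<rceil>"
  proof
    fix k assume "k \<in> ball1 j r"
    hence "norm1 (k - j) \<le> \<lceil>r\<rceil>" by (simp add: ball1_def) linarith
    hence "k - j \<in> ibox \<lceil>r\<rceil>" using comp_le_norm1[of "k - j"] by (auto simp: ibox_def intro: order_trans)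
    thus "k \<in> (\<lambda>v. v + j) ` ibox \<lceil>r\<rceil>" by (intro image_eqI[of _ _ "k - j"]) auto
  qed
  thus ?thesis by (meson finite_ibox finite_imageI finite_subset)
qed

text \<open>A bound on the coordinates of points of \<open>B\<^sub>p\<close>: they are convex combinations
  of sums of periods with coefficients in \<open>[0,1)\<close>.\<close>
definition Rb :: "('d::finite \<Rightarrow> 'd site) \<Rightarrow> int" where
  "Rb p = (\<Sum>m\<in>UNIV. \<Sum>i\<in>UNIV. \<bar>p m $ i\<bar>)"

lemma Bp_ibox:
  fixes p :: "'d::finite \<Rightarrow> 'd site"
  shows "Bp p \<subseteq> ibox (Rb p)"
proof
  fix k assume "k \<in> Bp p"
  then obtain t :: "real^'d" where t: "\<forall>j. 0 \<le> t $ j \<and> t $ j < 1"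
    "realv k = (\<Sum>j\<in>UNIV. t $ j *\<^sub>R realv (p j))" unfolding Bp_def by blast
  show "k \<in> ibox (Rb p)" unfolding ibox_def
  proof (intro CollectI allI)
    fix i
    have "real_of_int (k $ i) = (\<Sum>j\<in>UNIV. t $ j * real_of_int (p j $ i))"
      using arg_cong[OF t(2), of "\<lambda>v. v $ i"] by (simp add: realv_def sum_component)
    hence "\<bar>real_of_int (k $ i)\<bar> \<le> (\<Sum>j\<in>UNIV. \<bar>t $ j * real_of_int (p j $ i)\<bar>)"
      by (simp add: sum_abs)
    also have "\<dots> \<le> (\<Sum>j\<in>UNIV. real_of_int \<bar>p j $ i\<bar>)"
    proof (rule sum_mono)
      fix j
      have "\<bar>t $ j\<bar> \<le> 1" using t(1) by (simp add: abs_le_iff) (meson less_le_not_le order_trans)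
      thus "\<bar>t $ j * real_of_int (p j $ i)\<bar> \<le> real_of_int \<bar>p j $ i\<bar>"
        by (simp add: abs_mult mult_left_le_one_le)
    qed
    also have "\<dots> \<le> real_of_int (Rb p)"
    proof -
      have "(\<Sum>j\<in>UNIV. \<bar>p j $ i\<bar>) \<le> Rb p"
        unfolding Rb_def by (intro sum_mono member_le_sum) auto
      hence "real_of_int (\<Sum>j\<in>UNIV. \<bar>p j $ i\<bar>) \<le> real_of_int (Rb p)" by linarith
      thus ?thesis by simp
    qed
    finally show "\<bar>k $ i\<bar> \<le> Rb p" by simp
  qed
qed

lemma finite_Bp: "finite (Bp p)"
  using Bp_ibox finite_ibox finite_subset by blast

definition grid :: "nat \<Rightarrow> ('d::finite \<Rightarrow> int) set" where
  "grid N = PiE UNIV (\<lambda>_. {0..<int N})"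

definition edge :: "nat \<Rightarrow> int \<Rightarrow> ('d::finite \<Rightarrow> int) set" where
  "edge N R = {n \<in> grid N. \<exists>m. n m < R \<or> int N - R \<le> n m}"

lemma finite_grid: "finite (grid N)"
  unfolding grid_def by (intro finite_PiE) auto

lemma card_grid: "card (grid N :: ('d::finite \<Rightarrow> int) set) = N ^ CARD('d)"
  unfolding grid_def by (subst card_PiE) auto

text \<open>The edge layer has \<open>O(N\<^sup>d\<^sup>-\<^sup>1)\<close> points: it is covered by \<open>d\<close> slabs, each a
  product of a set with \<open>\<le> 2R\<close> elements and \<open>d - 1\<close> sides of length \<open>N\<close>.\<close>
lemma card_edge:
  assumes "0 \<le> R"
  shows "card (edge N R :: ('d::finite \<Rightarrow> int) set) \<le> CARD('d) * (2 * nat R * N ^ (CARD('d) - 1))"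
proof -
  define F where "F m = PiE UNIV (\<lambda>i::'d. if i = m then {0..<R} \<union> {int N - R..<int N} else {0..<int N})" for m
  have sub: "edge N R \<subseteq> (\<Union>m::'d. F m)"
  proof
    fix n :: "'d \<Rightarrow> int" assume "n \<in> edge N R"
    then obtain m where n: "n \<in> grid N" "n m < R \<or> int N - R \<le> n m"
      unfolding edge_def by blast
    have "n \<in> F m" using n unfolding F_def grid_def by (auto simp: PiE_iff)
    thus "n \<in> (\<Union>m::'d. F m)" by blast
  qed
  have finF: "finite (F m)" for m unfolding F_def by (intro finite_PiE) auto
  have cF: "card (F m) \<le> 2 * nat R * N ^ (CARD('d) - 1)" for m
  proof -
    let ?A = "\<lambda>i. if i = m then {0..<R} \<union> {int N - R..<int N} else {0..<int N}"
    have "card (F m) = (\<Prod>i\<in>UNIV. card (?A i))"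
      unfolding F_def by (rule card_PiE) simp
    also have "\<dots> = card (?A m) * (\<Prod>i\<in>UNIV-{m}. card (?A i))"
      by (subst prod.remove[of UNIV m]) auto
    also have "(\<Prod>i\<in>UNIV-{m}. card (?A i)) = N ^ (CARD('d) - 1)"
      by (simp add: card_Diff_singleton)
    also have "card (?A m) = card ({0..<R} \<union> {int N - R..<int N})" by simp
    also have "\<dots> \<le> card {0..<R} + card {int N - R..<int N}"
      by (rule card_Un_le)
    also have "\<dots> = 2 * nat R" using assms by simp
    finally show ?thesis by simp
  qed
  have "card (edge N R :: ('d \<Rightarrow> int) set) \<le> card (\<Union>m::'d. F m)"
    by (rule card_mono[OF _ sub]) (simp add: finF)
  also have "\<dots> \<le> (\<Sum>m\<in>UNIV. card (F m))" by (rule card_UN_le) simp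
  also have "\<dots> \<le> (\<Sum>m\<in>(UNIV::'d set). 2 * nat R * N ^ (CARD('d) - 1))" by (intro sum_mono cF)
  finally show ?thesis by simp
qed

section \<open>Periodic boxes and their collars\<close>

definition pbox :: "('d::finite \<Rightarrow> 'd site) \<Rightarrow> nat \<Rightarrow> 'd site set" where
  "pbox p N = (\<lambda>(j, n). j + lat p n) ` (Bp p \<times> grid N)"

definition collar :: "real \<Rightarrow> 'd::finite site set \<Rightarrow> 'd site set" where
  "collar r B = {k \<in> B. \<not> ball1 k r \<subseteq> interior_r r B}"

lemma finite_pbox: "finite (pbox p N)"
  unfolding pbox_def by (intro finite_imageI finite_SigmaI finite_Bp finite_grid)

context
  fixes p :: "'d::finite \<Rightarrow> 'd site"
  assumes injp: "inj (\<lambda>j. realv (p j))" and indp: "independent (range (\<lambda>j. realv (p j)))"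
begin

lemma pbox_param_inj: "inj_on (\<lambda>(j, n). j + lat p n) (Bp p \<times> UNIV)"
proof (rule inj_onI, clarify)
  fix j1 n1 j2 n2 assume h: "j1 \<in> Bp p" "j2 \<in> Bp p" "j1 + lat p n1 = j2 + lat p n2"
  have "n1 = n2" by (rule decomp_unique[OF injp indp h])
  with h(3) show "j1 = j2 \<and> n1 = n2" by simp
qed

lemma WB_pbox:
  assumes "condB S" "u \<in> Xpq p q"
  shows "WB S (pbox p N) u = real N ^ CARD('d) * Wpq S p u"
proof -
  have inj: "inj_on (\<lambda>(j, n). j + lat p n) (Bp p \<times> grid N)"
    using pbox_param_inj by (rule inj_on_subset) auto
  have "WB S (pbox p N) u = (\<Sum>(j, n)\<in>Bp p \<times> grid N. S (j + lat p n) u)"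
    unfolding WB_def pbox_def by (subst sum.reindex[OF inj]) (simp add: case_prod_unfold)
  also have "\<dots> = (\<Sum>(j, n)\<in>Bp p \<times> (grid N :: ('d \<Rightarrow> int) set). S j u)"
    using S_per[OF assms] by (simp add: case_prod_unfold)
  also have "\<dots> = (\<Sum>j\<in>Bp p. real (card (grid N :: ('d \<Rightarrow> int) set)) * S j u)"
    by (simp add: sum.cartesian_product[symmetric])
  finally show ?thesis by (simp add: card_grid Wpq_def sum_distrib_left)
qed

lemma lat_coords_bounded: "\<exists>R\<ge>0. \<forall>n m. lat p n \<in> ibox R0 \<longrightarrow> \<bar>n m\<bar> \<le> R"
proof -
  define Cs where "Cs = lat p -` ibox R0"
  have finCs: "finite Cs"
    unfolding Cs_def by (rule finite_vimageI[OF finite_ibox lat_inj[OF injp indp]])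
  define R where "R = Max (insert 0 ((\<lambda>(c, m). \<bar>c m\<bar>) ` (Cs \<times> UNIV)))"
  have "0 \<le> R" "\<And>c m. c \<in> Cs \<Longrightarrow> \<bar>c m\<bar> \<le> R"
    unfolding R_def using finCs by (intro Max_ge; force)+
  thus ?thesis unfolding Cs_def by blast
qed

text \<open>A collar site lies within \<open>l\<^sup>1\<close>-distance \<open>2r\<close> of a site outside the box; hence its
  lattice coordinates lie in an edge layer whose width does not depend on \<open>N\<close>.\<close>
lemma collar_near_edge:
  assumes "0 < r"
  shows "\<exists>R\<ge>0. \<forall>N. collar r (pbox p N) \<subseteq> (\<lambda>(j, n). j + lat p n) ` (Bp p \<times> edge N R)"
proof -
  obtain R where R0: "0 \<le> R"
    and R: "\<And>n m. lat p n \<in> ibox (\<lceil>2 * r\<rceil> + 2 * Rb p) \<Longrightarrow> \<bar>n m\<bar> \<le> R"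
    using lat_coords_bounded by blast
  have "k \<in> (\<lambda>(j, n). j + lat p n) ` (Bp p \<times> edge N R)" if kC: "k \<in> collar r (pbox p N)" for N k
  proof -
    let ?B = "pbox p N"
    have "k \<in> ?B" using kC by (simp add: collar_def)
    then obtain j n where j: "j \<in> Bp p" "n \<in> grid N" "k = j + lat p n"
      unfolding pbox_def by auto
    obtain k1 where k1: "k1 \<in> ball1 k r" "k1 \<notin> interior_r r ?B"
      using kC unfolding collar_def by blast
    obtain k2 where k2: "k2 \<notin> ?B" "norm1 (k2 - k) \<le> 2 * r"
    proof (cases "k1 \<in> ?B")
      case False
      thus ?thesis using k1(1) assms by (intro that[of k1]) (auto simp: ball1_def)
    next
      case True
      with k1(2) obtain k2 where "k2 \<in> ball1 k1 r" "k2 \<notin> ?B" by (auto simp: interior_r_def)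
      moreover have "norm1 (k2 - k) \<le> norm1 (k2 - k1) + norm1 (k1 - k)"
        using norm1_triangle[of "k2 - k1" "k1 - k"] by simp
      ultimately show ?thesis using k1(1) by (intro that[of k2]) (auto simp: ball1_def)
    qed
    obtain j2 n2 where j2: "j2 \<in> Bp p" "k2 = j2 + lat p n2"
      using decomp_exists[OF injp indp] by blast
    have "lat p (\<lambda>m. n2 m - n m) \<in> ibox (\<lceil>2 * r\<rceil> + 2 * Rb p)"
      unfolding ibox_def
    proof (intro CollectI allI)
      fix m
      have "\<bar>(k2 - k) $ m\<bar> \<le> \<lceil>2 * r\<rceil>" using comp_le_norm1[of "k2 - k" m] k2(2) by linarith
      moreover have "\<bar>j $ m\<bar> \<le> Rb p" "\<bar>j2 $ m\<bar> \<le> Rb p"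
        using Bp_ibox j(1) j2(1) by (auto simp: ibox_def)
      moreover have "lat p (\<lambda>m. n2 m - n m) = (k2 - k) + j - j2"
        by (simp add: lat_diff j j2 algebra_simps)
      ultimately show "\<bar>lat p (\<lambda>m. n2 m - n m) $ m\<bar> \<le> \<lceil>2 * r\<rceil> + 2 * Rb p" by simp
    qed
    hence close: "\<bar>n2 m - n m\<bar> \<le> R" for m using R by blast
    have "n2 \<notin> grid N" using k2(1) j2 unfolding pbox_def by auto
    then obtain m where "\<not> (0 \<le> n2 m \<and> n2 m < int N)" by (auto simp: grid_def PiE_iff)
    hence "n m < R \<or> int N - R \<le> n m" using close[of m] by linarith
    hence "n \<in> edge N R" using j(2) unfolding edge_def by blast
    thus ?thesis using j by auto
  qed
  thus ?thesis using R0 by blast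
qed

lemma card_collar:
  assumes "0 < r"
  shows "\<exists>Q. \<forall>N. real (card (collar r (pbox p N))) \<le> Q * real N ^ (CARD('d) - 1)"
proof -
  obtain R where R0: "0 \<le> R"
    and sub: "\<And>N. collar r (pbox p N) \<subseteq> (\<lambda>(j, n). j + lat p n) ` (Bp p \<times> edge N R)"
    using collar_near_edge[OF assms] by blast
  have "card (collar r (pbox p N)) \<le> card (Bp p) * (CARD('d) * (2 * nat R)) * N ^ (CARD('d) - 1)"
    for N
  proof -
    have fin: "finite (Bp p \<times> (edge N R :: ('d \<Rightarrow> int) set))"
      by (simp add: finite_Bp edge_def finite_grid)
    have "card (collar r (pbox p N)) \<le> card ((\<lambda>(j, n). j + lat p n) ` (Bp p \<times> edge N R))"
      by (rule card_mono[OF finite_imageI[OF fin] sub])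
    also have "\<dots> \<le> card (Bp p \<times> (edge N R :: ('d \<Rightarrow> int) set))"
      by (rule card_image_le) (rule fin)
    also have "\<dots> \<le> card (Bp p) * (CARD('d) * (2 * nat R * N ^ (CARD('d) - 1)))"
      unfolding card_cartesian_product by (rule mult_le_mono2[OF card_edge[OF R0]])
    finally show ?thesis by (simp add: mult.assoc)
  qed
  hence "real (card (collar r (pbox p N)))
      \<le> real (card (Bp p) * (CARD('d) * (2 * nat R))) * real N ^ (CARD('d) - 1)" for N
    using of_nat_mono[where 'a = real] by (metis of_nat_mult of_nat_power)
  thus ?thesis by blast
qed

text \<open>By periodicity and locality, the potentials of all mixtures of two periodic
  configurations take only finitely many values per translation class, hence are bounded.\<close>
lemma mix_bounded:
  assumes "condA r S" "condB S" "x \<in> Xpq p q" "z \<in> Xpq p q"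
  shows "\<exists>M. \<forall>k A. S k (mix x z A) \<le> M"
proof -
  have loc: "\<And>j u v. (\<forall>k\<in>ball1 j r. u k = v k) \<Longrightarrow> S j u = S j v"
    using assms(1) unfolding condA_def by blast
  define V where "V = (\<lambda>(j, A). S j (mix x z A)) ` (SIGMA j:Bp p. Pow (ball1 j r))"
  have finV: "finite V" unfolding V_def
    by (intro finite_imageI finite_SigmaI finite_Bp) (simp add: finite_ball1)
  have "S k (mix x z A) \<le> Max V" for k A
  proof -
    obtain j n where j: "j \<in> Bp p" "k = j + lat p n" using decomp_exists[OF injp indp] by blast
    let ?A = "{i. i + lat p n \<in> A} \<inter> ball1 j r"
    have "S k (mix x z A) = S j (tau (lat p n) (lq q n) (mix x z A))"
      using assms(2) j(2) by (simp add: condB_def)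
    also have "\<dots> = S j (mix x z {i. i + lat p n \<in> A})" by (simp add: tau_mix[OF assms(3,4)])
    also have "\<dots> = S j (mix x z ?A)" by (rule loc) (simp add: mix_def)
    also have "\<dots> \<le> Max V"
      using finV j(1) unfolding V_def by (intro Max_ge) auto
    finally show ?thesis .
  qed
  thus ?thesis by blast
qed

end

section \<open>Energy estimates\<close>

text \<open>By (B), the lower bound in (C) for a single potential holds uniformly.\<close>
lemma uniformly_bounded_below:
  assumes "condB S" "condC S"
  shows "\<exists>c. \<forall>k u. c \<le> S k u"
proof -
  obtain c where c: "\<And>u. c \<le> S 0 u" using assms(2) unfolding condC_def by blast
  have "c \<le> S k u" for k u
    using c[of "tau k 0 u"] assms(1) unfolding condB_def by (metis add_0)
  thus ?thesis by blast
qed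

lemma replacement_estimate:
  assumes "finite B"
    and loc: "\<And>k u v. (\<forall>i\<in>ball1 k r. u i = v i) \<Longrightarrow> S k u = S k v"
    and bound: "\<And>k. k \<in> B \<Longrightarrow> S k (mix x z I) - S k z \<le> K"
  shows "WB S B (mix x z I) \<le> WB S B z + K * real (card {k \<in> B. \<not> ball1 k r \<subseteq> I})"
proof -
  have "WB S B (mix x z I) - WB S B z = (\<Sum>k\<in>B. S k (mix x z I) - S k z)"
    by (simp add: WB_def sum_subtractf)
  also have "\<dots> \<le> (\<Sum>k\<in>B. if \<not> ball1 k r \<subseteq> I then K else 0)"
  proof (rule sum_mono)
    fix k assume "k \<in> B"
    have "ball1 k r \<subseteq> I \<Longrightarrow> S k (mix x z I) = S k z" by (intro loc) (auto simp: mix_def)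
    thus "S k (mix x z I) - S k z \<le> (if \<not> ball1 k r \<subseteq> I then K else 0)"
      using bound[OF \<open>k \<in> B\<close>] by auto
  qed
  also have "\<dots> = K * real (card {k \<in> B. \<not> ball1 k r \<subseteq> I})"
    by (simp add: sum.inter_filter[symmetric, OF assms(1)])
  finally show ?thesis by simp
qed

lemma global_minimizer_mix:
  assumes "global_minimizer r S x" "finite B"
  shows "WB S B x \<le> WB S B (mix x z (interior_r r B))"
proof -
  define y where "y = (\<lambda>i. if i \<in> interior_r r B then z i - x i else 0)"
  have "(\<lambda>i. x i + y i) = mix x z (interior_r r B)" by (simp add: y_def mix_def fun_eq_iff)
  moreover have "{i. y i \<noteq> 0} \<subseteq> interior_r r B" by (auto simp: y_def split: if_splits)
  ultimately show ?thesis using assms unfolding global_minimizer_def by metis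
qed

text \<open>A volume term dominates a boundary term: dividing by \<open>N\<^sup>d\<close> and letting \<open>N \<rightarrow> \<infinity>\<close>.\<close>
lemma volume_dominates_boundary:
  fixes a b C :: real
  assumes "0 < d" and ineq: "\<And>N::nat. 0 < N \<Longrightarrow> real N ^ d * a \<le> real N ^ d * b + C * real N ^ (d - 1)"
  shows "a \<le> b"
proof (rule ccontr)
  assume "\<not> a \<le> b"
  hence pos: "0 < a - b" by simp
  obtain N :: nat where N: "max 0 (C / (a - b)) < real N" using reals_Archimedean2 by blast
  hence "0 < N" by (simp add: max_less_iff_conj)
  obtain e where d: "d = Suc e" using \<open>0 < d\<close> gr0_implies_Suc by blast
  have "real N ^ e * (real N * (a - b)) \<le> real N ^ e * C"
    using ineq[OF \<open>0 < N\<close>] by (simp add: d algebra_simps)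
  hence "real N * (a - b) \<le> C" using \<open>0 < N\<close> by simp
  moreover have "C < real N * (a - b)" using N pos by (simp add: pos_divide_less_eq)
  ultimately show False by simp
qed

theorem mainTheorem6:
  fixes r :: real
    and S :: "'d::finite site \<Rightarrow> 'd config \<Rightarrow> real"
    and p :: "'d \<Rightarrow> 'd site"
    and q :: "'d \<Rightarrow> int"
    and x :: "'d config"
  assumes "condA r S" and "condB S" and "condC S" and "condD S" and "condE S"
    and "inj (\<lambda>j. realv (p j))" and "independent (range (\<lambda>j. realv (p j)))"
    and "x \<in> Xpq p q"
    and "global_minimizer r S x"
  shows "\<forall>z\<in>Xpq p q. Wpq S p x \<le> Wpq S p z"
proof
  fix z assume zX: "z \<in> Xpq p q"
  have rpos: "0 < r" and loc: "\<And>k u v. (\<forall>i\<in>ball1 k r. u i = v i) \<Longrightarrow> S k u = S k v"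
    using assms(1) unfolding condA_def by blast+
  obtain c where c: "\<And>k u. c \<le> S k u" using uniformly_bounded_below[OF assms(2,3)] by blast
  obtain M where M: "\<And>k A. S k (mix x z A) \<le> M"
    using mix_bounded[OF assms(6,7,1,2,8) zX] by blast
  obtain Q where Q: "\<And>N. real (card (collar r (pbox p N))) \<le> Q * real N ^ (CARD('d) - 1)"
    using card_collar[OF assms(6,7) rpos] by blast
  define K where "K = max 0 (M - c)"
  have bound: "S k (mix x z A) - S k z \<le> K" for k A
    using M[of k A] c[of k z] by (simp add: K_def le_max_iff_disj)
  show "Wpq S p x \<le> Wpq S p z"
  proof (rule volume_dominates_boundary[where C = "K * Q"])
    fix N :: nat
    let ?B = "pbox p N"
    have "real N ^ CARD('d) * Wpq S p x = WB S ?B x"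
      by (rule WB_pbox[OF assms(6,7,2,8), symmetric])
    also have "\<dots> \<le> WB S ?B (mix x z (interior_r r ?B))"
      by (rule global_minimizer_mix[OF assms(9) finite_pbox])
    also have "\<dots> \<le> WB S ?B z + K * real (card (collar r ?B))"
      unfolding collar_def by (rule replacement_estimate[OF finite_pbox loc bound])
    also have "\<dots> \<le> real N ^ CARD('d) * Wpq S p z + K * Q * real N ^ (CARD('d) - 1)"
      using Q[of N] WB_pbox[OF assms(6,7,2) zX, of N]
      by (simp add: K_def mult.assoc mult_left_mono)
    finally show "real N ^ CARD('d) * Wpq S p x
        \<le> real N ^ CARD('d) * Wpq S p z + K * Q * real N ^ (CARD('d) - 1)" .
  qed simp
qed

end
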